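(* In the setting of the context (analytic vector field $f$ with Jacobian $A$ having distinct eigenvalues, truncation order $N_{\max}\ge 1$ with the non-resonance condition, fixed index sets $S_N$, fixed perturbation amplitude $\alpha\neq0$), let $(\phi_j,\psi_j)_{j=1}^n$ and $(\phi'_j,\psi'_j)_{j=1}^n$ be two eigenvector choices with $\theta$-factors $\theta_j$ and $\theta'_j$. If $\theta_j=\theta'_j$ for all $j\in\{1,\dots,n\}$, then for every state index $k\in\{1,\dots,n\}$, every combination order $M$ with $1\le M\le N_{\max}$ and every tuple of mode indices $(r_1,\dots,r_M)\in\{1,\dots,n\}^M$, the nonlinear participation factors computed from the two choices coincide: $p_{k,r_1\cdots r_M}=p'_{k,r_1\cdots r_M}$. That is, the nonlinear participation factors of all orders, for linear modes ($M=1$) and combination modes ($M\ge2$), are uniquely determined whenever all $\theta$-factors are uniquely determined.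
   Context: Let $f:\mathbb{R}^n\to\mathbb{R}^n$ be analytic with $f(0)=0$, and write its Taylor expansion at $0$ as $f_j(x)=\sum_{i}a_{ji}x_i+\sum_{N\ge2}\sum_{\alpha_1,\dots,\alpha_N=1}^n a_{j,\alpha_1\cdots\alpha_N}x_{\alpha_1}\cdots x_{\alpha_N}$. Let $A=(a_{ji})$ be the Jacobian at $0$, assumed to have $n$ distinct eigenvalues $\lambda_1,\dots,\lambda_n\in\mathbb{C}$. For each $i$ fix a right eigenvector $\hat\phi_i$ (column) and a left eigenvector $\hat\psi_i$ (row) of $A$ for $\lambda_i$, each of unit 2-norm, and set $c_i:=\hat\psi_i\hat\phi_i\neq0$ (non-conjugated product). An eigenvector choice is a tuple $(\phi_i,\psi_i)_{i=1}^n$ with $\phi_i=\sigma_i\hat\phi_i$, $\psi_i=\xi_i\hat\psi_i$, $\sigma_i,\xi_i\in\mathbb{C}\setminus\{0\}$; its $\theta$-factors are $\theta_i:=\psi_i\phi_i=\sigma_i\xi_ic_i$. Write $\phi_{ki}$, $\psi_{ik}$ for the $k$-th entries of $\phi_i$, $\psi_i$. Fix a truncation order $N_{\max}\ge1$ and assume non-resonance: $\lambda_{r_1}+\dots+\lambda_{r_N}-\lambda_i\neq0$ for all $2\le N\le N_{\max}$, all $i$ and all $(r_1,\dots,r_N)$. Given an eigenvector choice, define for $2\le N\le N_{\max}$ the normal-form coefficients $h^i_{r_1\cdots r_N}:=\dfrac{\sum_{j=1}^n\sum_{\alpha_1,\dots,\alpha_N=1}^n\psi_{ij}\,a_{j,\alpha_1\cdots\alpha_N}\,\phi_{\alpha_1r_1}\cdots\phi_{\alpha_Nr_N}}{\lambda_{r_1}+\dots+\lambda_{r_N}-\lambda_i}$,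 and for $N=1$ set $h^i_r:=1$ if $r=i$ and $0$ otherwise. For each $2\le N\le N_{\max}$ fix an index set $S_N\subseteq\{1,\dots,n\}^N$ (independent of the eigenvector choice; e.g. in second order the paper uses $\{(p,q):p\le q\}$). Fix a perturbation amplitude $\alpha\in\mathbb{R}\setminus\{0\}$ (initial state $\alpha e_k$). Define $\mu_{lk}:=\alpha\psi_{lk}-\sum_{N=2}^{N_{\max}}\alpha^N\sum_{(r_1,\dots,r_N)\in S_N}h^l_{r_1\cdots r_N}\psi_{r_1k}\cdots\psi_{r_Nk}$, and the nonlinear participation factor of state $k$ in the (linear if $M=1$, combination if $M\ge2$) mode $(r_1,\dots,r_M)$, $1\le M\le N_{\max}$, as $p_{k,r_1\cdots r_M}:=\sum_{i=1}^n\phi_{ki}\,h^i_{r_1\cdots r_M}\,\mu_{r_1k}\cdots\mu_{r_Mk}$ (for $M=1$ this is $p_{kr}=\phi_{kr}\mu_{rk}$). *)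

theory Defs
  imports "HOL-Analysis.Analysis"
begin

text \<open>State indices and mode indices range over a finite type 'n (standing for {1..n}).
  Higher-order Taylor coefficients a_{j,alpha_1...alpha_N} are given as a function
  a j [alpha_1,...,alpha_N]; tuples (r_1,...,r_N) are lists of length N.\<close>

definition tuples :: "nat \<Rightarrow> 'n::finite list set" where
  "tuples N = {xs. set xs \<subseteq> UNIV \<and> length xs = N}"

definition cplx_mat :: "real^'n^'n \<Rightarrow> complex^'n^'n" where
  "cplx_mat A = (\<chi> j k. complex_of_real (A$j$k))"

text \<open>Non-conjugated product of a row vector psi and a column vector phi.\<close>
definition bilin :: "complex^'n::finite \<Rightarrow> complex^'n \<Rightarrow> complex" where
  "bilin psi phi = (\<Sum>k\<in>UNIV. psi$k * phi$k)"

definition nf_coeff ::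
  "('n::finite \<Rightarrow> 'n list \<Rightarrow> real) \<Rightarrow> ('n \<Rightarrow> complex) \<Rightarrow>
   ('n \<Rightarrow> complex^'n) \<Rightarrow> ('n \<Rightarrow> complex^'n) \<Rightarrow> 'n \<Rightarrow> 'n list \<Rightarrow> complex" where
  "nf_coeff a lam phi psi i rs =
     (if length rs = 1 then (if rs = [i] then 1 else 0)
      else (\<Sum>j\<in>UNIV. \<Sum>al\<in>tuples (length rs).
              (psi i)$j * complex_of_real (a j al) *
              (\<Prod>m<length rs. (phi (rs!m))$(al!m)))
           / (sum_list (map lam rs) - lam i))"

definition mu_coeff ::
  "('n::finite \<Rightarrow> 'n list \<Rightarrow> real) \<Rightarrow> ('n \<Rightarrow> complex) \<Rightarrow> nat \<Rightarrow> (nat \<Rightarrow> 'n list set) \<Rightarrow> real \<Rightarrow>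
   ('n \<Rightarrow> complex^'n) \<Rightarrow> ('n \<Rightarrow> complex^'n) \<Rightarrow> 'n \<Rightarrow> 'n \<Rightarrow> complex" where
  "mu_coeff a lam Nmax S alpha phi psi l k =
     complex_of_real alpha * (psi l)$k
     - (\<Sum>N\<in>{2..Nmax}. complex_of_real alpha ^ N *
          (\<Sum>rs\<in>S N. nf_coeff a lam phi psi l rs * (\<Prod>m<length rs. (psi (rs!m))$k)))"

definition part_factor ::
  "('n::finite \<Rightarrow> 'n list \<Rightarrow> real) \<Rightarrow> ('n \<Rightarrow> complex) \<Rightarrow> nat \<Rightarrow> (nat \<Rightarrow> 'n list set) \<Rightarrow> real \<Rightarrow>
   ('n \<Rightarrow> complex^'n) \<Rightarrow> ('n \<Rightarrow> complex^'n) \<Rightarrow> 'n \<Rightarrow> 'n list \<Rightarrow> complex" where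
  "part_factor a lam Nmax S alpha phi psi k rs =
     (\<Sum>i\<in>UNIV. (phi i)$k * nf_coeff a lam phi psi i rs *
        (\<Prod>m<length rs. mu_coeff a lam Nmax S alpha phi psi (rs!m) k))"

end

theory Submission
  imports Defs
begin

text \<open>Left and right eigenvectors of distinct eigenvalues are orthogonal for the pairing
  \<open>bilin\<close>, and the right eigenvectors form a basis, so every pairing
  \<open>c i = bilin (psih i) (phih i)\<close> is nonzero. Hence \<open>theta i = sigma i * xi i * c i\<close> determines
  \<open>sigma i * xi i\<close>, and two choices with equal theta-factors differ by a rescaling
  \<open>phi i \<mapsto> s i *s phi i\<close>, \<open>psi i \<mapsto> inverse (s i) *s psi i\<close>. Under it \<open>h\<^sup>i\<^sub>r\<^sub>s\<close> gains the factor
  \<open>(\<Prod>r\<leftarrow>rs. s r) / s i\<close> and \<open>\<mu>\<^sub>l\<^sub>k\<close> the factor \<open>1 / s l\<close>; these cancel in every summand of the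
  participation factor. Non-resonance, the index sets and alpha play no role.\<close>

lemma eigenvectors_independent:
  fixes M :: "'a::field^'n::finite^'n" and v :: "'i \<Rightarrow> 'a^'n"
  assumes "inj lam" and eig: "\<And>i. M *v v i = lam i *s v i" and nz: "\<And>i. v i \<noteq> 0"
    and "finite T" and "(\<Sum>j\<in>T. c j *s v j) = 0" and "j \<in> T"
  shows "c j = 0"
  using assms(4-6)
proof (induction T arbitrary: c j rule: finite_induct)
  case empty then show ?case by simp
next
  case (insert t T)
  let ?x = "\<Sum>j\<in>insert t T. c j *s v j"
  have "(\<Sum>j\<in>T. (c j * (lam j - lam t)) *s v j) = (\<Sum>j\<in>insert t T. (c j * (lam j - lam t)) *s v j)"
    using insert.hyps by simp
  also have "\<dots> = M *v ?x - lam t *s ?x"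
    by (simp add: vec.sum vec.scale eig algebra_simps sum_subtractf vec.scale_sum_right)
  finally have "(\<Sum>j\<in>T. (c j * (lam j - lam t)) *s v j) = 0"
    using insert.prems(1) by simp
  then have "c j * (lam j - lam t) = 0" if "j \<in> T" for j
    using insert.IH[of "\<lambda>j. c j * (lam j - lam t)"] that by blast
  moreover have "lam j \<noteq> lam t" if "j \<in> T" for j
    using that insert.hyps(2) \<open>inj lam\<close> by (metis injD)
  ultimately have cT: "c j = 0" if "j \<in> T" for j
    using that by simp
  then have "c t *s v t = 0"
    using insert.prems(1) insert.hyps by simp
  then show ?case
    using cT nz[of t] insert.prems(2) by auto
qed

lemma bilin_scale: "bilin (a *s x) (b *s y) = a * b * bilin x y"
  unfolding bilin_def by (simp add: sum_distrib_left mult_ac)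

lemma bilin_vector_matrix_mult: "bilin (x v* M) y = bilin x (M *v y)"
proof -
  have "bilin (x v* M) y = (\<Sum>k\<in>UNIV. \<Sum>j\<in>UNIV. x$j * M$j$k * y$k)"
    unfolding bilin_def vector_matrix_mult_def by (simp add: sum_distrib_right)
  also have "\<dots> = (\<Sum>j\<in>UNIV. \<Sum>k\<in>UNIV. x$j * M$j$k * y$k)"
    by (rule sum.swap)
  also have "\<dots> = bilin x (M *v y)"
    unfolding bilin_def matrix_vector_mult_def by (simp add: sum_distrib_left mult.assoc)
  finally show ?thesis .
qed

lemma bilin_left_right_eigenvectors_orthogonal:
  assumes "x v* M = \<mu> *s x" and "M *v y = \<nu> *s y" and "\<mu> \<noteq> \<nu>"
  shows "bilin x y = 0"
proof -
  have "\<mu> * bilin x y = \<nu> * bilin x y"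
    using bilin_vector_matrix_mult[of x M y] bilin_scale[of \<mu> x 1 y] bilin_scale[of 1 x \<nu> y]
    by (simp add: assms)
  then show ?thesis
    using \<open>\<mu> \<noteq> \<nu>\<close> by simp
qed

lemma eigenvector_columns_right_invertible:
  fixes M :: "'a::field^'n::finite^'n" and v :: "'n \<Rightarrow> 'a^'n"
  assumes "inj lam" and "\<And>i. M *v v i = lam i *s v i" and "\<And>i. v i \<noteq> 0"
  shows "\<exists>B. (\<chi> k j. v j $ k) ** B = mat 1"
proof -
  have "\<exists>B. B ** (\<chi> k j. v j $ k) = mat 1"
    unfolding matrix_left_invertible_ker
  proof (intro allI impI)
    fix c assume "(\<chi> k j. v j $ k) *v c = 0"
    have "(\<Sum>j\<in>UNIV. c $ j *s v j) = 0"
      using \<open>(\<chi> k j. v j $ k) *v c = 0\<close>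
      by (simp add: vec_eq_iff matrix_vector_mult_def sum_component mult.commute)
    then have "c $ j = 0" for j
      by (rule eigenvectors_independent[OF assms finite_class.finite_UNIV]) simp
    then show "c = 0"
      by (simp add: vec_eq_iff)
  qed
  then show ?thesis
    using matrix_left_right_inverse by blast
qed

lemma bilin_left_right_eigenvector_nonzero:
  fixes M :: "complex^'n::finite^'n" and phi :: "'n \<Rightarrow> complex^'n"
  assumes "inj lam" and right_eig: "\<And>j. M *v phi j = lam j *s phi j" and "\<And>j. phi j \<noteq> 0"
    and left_eig: "x v* M = lam i *s x" and "x \<noteq> 0"
  shows "bilin x (phi i) \<noteq> 0"
proof
  assume "bilin x (phi i) = 0"
  moreover have "bilin x (phi j) = 0" if "j \<noteq> i" for j
    using bilin_left_right_eigenvectors_orthogonal[OF left_eig right_eig] that \<open>inj lam\<close>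
    by (metis injD)
  ultimately have "bilin x (phi j) = 0" for j
    by (cases "j = i") auto
  then have "x v* (\<chi> k j. phi j $ k) = 0"
    by (simp add: vec_eq_iff vector_matrix_mult_def bilin_def mult.commute)
  moreover obtain B where "(\<chi> k j. phi j $ k) ** B = mat 1"
    using eigenvector_columns_right_invertible[OF assms(1-3)] by blast
  ultimately have "x = 0"
    by (metis vector_matrix_mul_assoc vector_matrix_mul_rid vector_matrix_mult_0)
  then show False
    using \<open>x \<noteq> 0\<close> by contradiction
qed

lemma nf_coeff_rescale:
  fixes s :: "'n::finite \<Rightarrow> complex"
  assumes "\<And>i. s i \<noteq> 0"
  shows "nf_coeff a lam (\<lambda>i. s i *s phi i) (\<lambda>i. inverse (s i) *s psi i) i rs
       = inverse (s i) * (\<Prod>m<length rs. s (rs!m)) * nf_coeff a lam phi psi i rs"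
proof (cases "length rs = 1")
  case True
  then obtain r where "rs = [r]"
    by (auto simp: length_Suc_conv)
  then show ?thesis
    using assms[of i] by (simp add: nf_coeff_def)
next
  case False
  then show ?thesis
    unfolding nf_coeff_def
    by (simp add: prod.distrib sum_distrib_left mult_ac del: inverse_eq_divide)
qed

lemma mu_coeff_rescale:
  fixes s :: "'n::finite \<Rightarrow> complex"
  assumes "\<And>i. s i \<noteq> 0"
  shows "mu_coeff a lam Nmax S alpha (\<lambda>i. s i *s phi i) (\<lambda>i. inverse (s i) *s psi i) l k
       = inverse (s l) * mu_coeff a lam Nmax S alpha phi psi l k"
proof -
  have "nf_coeff a lam (\<lambda>i. s i *s phi i) (\<lambda>i. inverse (s i) *s psi i) l rs
          * (\<Prod>m<length rs. (inverse (s (rs!m)) *s psi (rs!m)) $ k)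
      = inverse (s l) * (nf_coeff a lam phi psi l rs * (\<Prod>m<length rs. psi (rs!m) $ k))" for rs
  proof -
    have "nf_coeff a lam (\<lambda>i. s i *s phi i) (\<lambda>i. inverse (s i) *s psi i) l rs
          * (\<Prod>m<length rs. (inverse (s (rs!m)) *s psi (rs!m)) $ k)
      = inverse (s l) * (nf_coeff a lam phi psi l rs * (\<Prod>m<length rs. psi (rs!m) $ k))
          * ((\<Prod>m<length rs. s (rs!m)) * (\<Prod>m<length rs. inverse (s (rs!m))))"
      by (simp add: nf_coeff_rescale[OF assms] prod.distrib mult_ac del: inverse_eq_divide)
    moreover have "(\<Prod>m<length rs. s (rs!m)) * (\<Prod>m<length rs. inverse (s (rs!m))) = 1"
      by (simp add: prod.distrib[symmetric] assms)
    ultimately show ?thesis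
      by simp
  qed
  then show ?thesis
    unfolding mu_coeff_def
    by (simp add: sum_distrib_left right_diff_distrib mult_ac del: inverse_eq_divide)
qed

lemma part_factor_rescale:
  fixes s :: "'n::finite \<Rightarrow> complex"
  assumes "\<And>i. s i \<noteq> 0"
  shows "part_factor a lam Nmax S alpha (\<lambda>i. s i *s phi i) (\<lambda>i. inverse (s i) *s psi i) k rs
       = part_factor a lam Nmax S alpha phi psi k rs"
proof -
  let ?phi' = "\<lambda>i. s i *s phi i" and ?psi' = "\<lambda>i. inverse (s i) *s psi i"
  have "?phi' i $ k * nf_coeff a lam ?phi' ?psi' i rs
          * (\<Prod>m<length rs. mu_coeff a lam Nmax S alpha ?phi' ?psi' (rs!m) k)
      = phi i $ k * nf_coeff a lam phi psi i rs
          * (\<Prod>m<length rs. mu_coeff a lam Nmax S alpha phi psi (rs!m) k)" for i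
  proof -
    have "?phi' i $ k * nf_coeff a lam ?phi' ?psi' i rs
          * (\<Prod>m<length rs. mu_coeff a lam Nmax S alpha ?phi' ?psi' (rs!m) k)
      = (s i * inverse (s i)) * (phi i $ k * nf_coeff a lam phi psi i rs
          * (\<Prod>m<length rs. mu_coeff a lam Nmax S alpha phi psi (rs!m) k))
          * ((\<Prod>m<length rs. s (rs!m)) * (\<Prod>m<length rs. inverse (s (rs!m))))"
      by (simp add: nf_coeff_rescale[OF assms] mu_coeff_rescale[OF assms] prod.distrib mult_ac
          del: inverse_eq_divide)
    moreover have "(\<Prod>m<length rs. s (rs!m)) * (\<Prod>m<length rs. inverse (s (rs!m))) = 1"
      by (simp add: prod.distrib[symmetric] assms)
    ultimately show ?thesis
      using assms[of i] by simp
  qed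
  then show ?thesis
    unfolding part_factor_def by (simp only:)
qed

lemma eigenvector_choices_equal_theta_rescale:
  fixes phih psih phi psi phi' psi' :: "'i \<Rightarrow> complex^'n::finite"
    and sigma xi sigma' xi' :: "'i \<Rightarrow> complex"
  assumes "\<And>i. bilin (psih i) (phih i) \<noteq> 0"
    and choice: "\<And>i. sigma i \<noteq> 0 \<and> xi i \<noteq> 0 \<and> phi i = sigma i *s phih i \<and> psi i = xi i *s psih i"
    and choice': "\<And>i. sigma' i \<noteq> 0 \<and> xi' i \<noteq> 0 \<and> phi' i = sigma' i *s phih i \<and> psi' i = xi' i *s psih i"
    and "\<And>i. bilin (psi i) (phi i) = bilin (psi' i) (phi' i)"
  obtains s where "\<And>i. s i \<noteq> 0" and "phi' = (\<lambda>i. s i *s phi i)"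
    and "psi' = (\<lambda>i. inverse (s i) *s psi i)"
proof (rule that)
  show "sigma' i / sigma i \<noteq> 0" for i
    using choice[of i] choice'[of i] by simp
  show "phi' = (\<lambda>i. (sigma' i / sigma i) *s phi i)"
  proof
    fix i
    show "phi' i = (sigma' i / sigma i) *s phi i"
      using choice[of i] choice'[of i] by simp
  qed
  show "psi' = (\<lambda>i. inverse (sigma' i / sigma i) *s psi i)"
  proof
    fix i
    have "xi i * sigma i * bilin (psih i) (phih i) = xi' i * sigma' i * bilin (psih i) (phih i)"
      using assms(4)[of i] choice[of i] choice'[of i] by (simp add: bilin_scale)
    then have "xi i * sigma i = xi' i * sigma' i"
      using assms(1)[of i] by simp
    then have "xi' i = inverse (sigma' i / sigma i) * xi i"
      using choice[of i] choice'[of i] by (simp add: field_simps)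
    then show "psi' i = inverse (sigma' i / sigma i) *s psi i"
      using choice[of i] choice'[of i] by (simp del: inverse_eq_divide)
  qed
qed

theorem theorem2:
  fixes A :: "real^'n::finite^'n"
    and a :: "'n \<Rightarrow> 'n list \<Rightarrow> real"
    and lam :: "'n \<Rightarrow> complex"
    and phih psih phi psi phi' psi' :: "'n \<Rightarrow> complex^'n"
    and sigma xi sigma' xi' :: "'n \<Rightarrow> complex"
    and Nmax :: nat and S :: "nat \<Rightarrow> 'n list set" and alpha :: real
  assumes distinct_eig: "inj lam"
    and right_eig: "\<And>i. cplx_mat A *v phih i = lam i *s phih i"
    and left_eig: "\<And>i. psih i v* cplx_mat A = lam i *s psih i"
    and right_unit: "\<And>i. norm (phih i) = 1"
    and left_unit: "\<And>i. norm (psih i) = 1"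
    and Nmax_pos: "Nmax \<ge> 1"
    and nonres: "\<And>N i rs. 2 \<le> N \<Longrightarrow> N \<le> Nmax \<Longrightarrow> rs \<in> tuples N \<Longrightarrow>
                   sum_list (map lam rs) - lam i \<noteq> 0"
    and S_sub: "\<And>N. 2 \<le> N \<Longrightarrow> N \<le> Nmax \<Longrightarrow> S N \<subseteq> tuples N"
    and alpha_nz: "alpha \<noteq> 0"
    and choice1: "\<And>i. sigma i \<noteq> 0 \<and> xi i \<noteq> 0 \<and>
                        phi i = sigma i *s phih i \<and> psi i = xi i *s psih i"
    and choice2: "\<And>i. sigma' i \<noteq> 0 \<and> xi' i \<noteq> 0 \<and>
                        phi' i = sigma' i *s phih i \<and> psi' i = xi' i *s psih i"
    and theta_eq: "\<And>j. bilin (psi j) (phi j) = bilin (psi' j) (phi' j)"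
  shows "\<forall>k M rs. 1 \<le> M \<and> M \<le> Nmax \<and> rs \<in> tuples M \<longrightarrow>
           part_factor a lam Nmax S alpha phi psi k rs =
           part_factor a lam Nmax S alpha phi' psi' k rs"
proof -
  have "phih i \<noteq> 0" "psih i \<noteq> 0" for i
    using right_unit[of i] left_unit[of i] by auto
  then have pairing_nonzero: "bilin (psih i) (phih i) \<noteq> 0" for i
    using bilin_left_right_eigenvector_nonzero[OF distinct_eig right_eig] left_eig by blast
  obtain s where s_nonzero: "\<And>i. s i \<noteq> 0" and "phi' = (\<lambda>i. s i *s phi i)"
    and "psi' = (\<lambda>i. inverse (s i) *s psi i)"
    using eigenvector_choices_equal_theta_rescale pairing_nonzero choice1 choice2 theta_eq
    by blast
  then show ?thesis
    by (simp add: part_factor_rescale[OF s_nonzero])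
qed

end
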